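(* Let $k=k(n)$ be integers with $1\le k=O(\log n)$ and let $\varphi(n)=o(1/k(n))$. For every $\eta>0$ there is $n_0$ such that for all $n\ge n_0$, every integer $r>(1/2-\varphi(n))n$, every $x\in Q$ and every $X\subseteq Q$ with $\mu(X)\le\mu(Q_r)$, $$\Pr(T(x)\in X)<(1+\eta)\mu(Q_r).$$
   Context: $Q=\{0,1\}^n$ with uniform probability measure $\mu$; for $y\in Q$, $|y|=\sum_i y_i$, and $Q_r=\{y\in Q: |y|\le r\}$. For $x\in Q$, $T(x)$ is the random element of $Q$ obtained by choosing $K$ uniformly from the $k$-subsets of $[n]$, keeping $x_i$ for $i\in K$, and replacing each $x_i$ with $i\notin K$ by an independent uniform bit. *)

theory Defs
  imports "HOL-Probability.Probability" "HOL-Library.Landau_Symbols"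
begin

text \<open>Points of Q = {0,1}^n are represented by their supports, i.e. subsets of {..<n}.
  |y| is card y.\<close>

definition cube :: "nat \<Rightarrow> nat set set" where
  "cube n = Pow {..<n}"

definition mu :: "nat \<Rightarrow> nat set set \<Rightarrow> real" where
  "mu n X = real (card (X \<inter> cube n)) / 2 ^ n"

definition ball_r :: "nat \<Rightarrow> int \<Rightarrow> nat set set" where
  "ball_r n r = {y \<in> cube n. int (card y) \<le> r}"

text \<open>T(x): choose a uniform k-subset K of [n], keep coordinates in K,
  resample the others by independent uniform bits (= uniform subset of the complement).\<close>
definition T :: "nat \<Rightarrow> nat \<Rightarrow> nat set \<Rightarrow> nat set pmf" where
  "T n k x = do {
     K \<leftarrow> pmf_of_set {K. K \<subseteq> {..<n} \<and> card K = k};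
     R \<leftarrow> pmf_of_set (Pow ({..<n} - K));
     return_pmf ((x \<inter> K) \<union> R) }"

end

theory Submission
  imports Defs "HOL-Real_Asymp.Real_Asymp"
begin

text \<open>The probability that \<open>T x = y\<close> is \<open>C(n - |x \<triangle> y|, k) / (C(n, k) 2\<^sup>n\<^sup>-\<^sup>k)\<close>, a decreasing function
  of the Hamming distance from \<open>x\<close>. Hence no set of at most \<open>|Q\<^sub>r|\<close> points is more likely than the
  Hamming ball of radius \<open>r\<close> about \<open>x\<close>, whose probability is \<open>B(n - k, r) / 2\<^sup>n\<^sup>-\<^sup>k\<close> with
  \<open>B(m, a) = \<Sum>s\<le>a. C(m, s)\<close>. Since \<open>2\<^sup>k B(n - k, r - k) \<le> B(n, r)\<close>, it remains to show that the
  \<open>k\<close> top layers of \<open>B(n - k, r)\<close> are negligible. For \<open>r > (1/2 - \<phi>) n\<close> the coefficients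
  \<open>C(n - k, s)\<close> near \<open>s = r\<close> grow by a factor at most \<open>1 + O(|\<phi>| + kN/n)\<close> per step, so each top
  layer is at most twice each of the \<open>kN\<close> layers below it, and the top layers carry at most a
  \<open>2/N\<close> fraction of \<open>B(n - k, r - k)\<close>. This needs \<open>kN|\<phi>|\<close> and \<open>(kN)\<^sup>2/n\<close> to be small, which holds
  eventually for every fixed \<open>N\<close> because \<open>k = O(log n)\<close> and \<open>\<phi> = o(1/k)\<close>.\<close>

definition binom_sum :: "nat \<Rightarrow> nat \<Rightarrow> nat" where
  "binom_sum m a = (\<Sum>s\<le>a. m choose s)"

lemma card_subsets_card_le:
  assumes "finite A"
  shows "card {S. S \<subseteq> A \<and> card S \<le> r} = binom_sum (card A) r"
proof -
  have "{S. S \<subseteq> A \<and> card S \<le> r} = (\<Union>s\<le>r. {S. S \<subseteq> A \<and> card S = s})"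
    by auto
  moreover have "card (\<Union>s\<le>r. {S. S \<subseteq> A \<and> card S = s}) = (\<Sum>s\<le>r. card {S. S \<subseteq> A \<and> card S = s})"
    using assms by (intro card_UN_disjoint) (auto intro: finite_subset[of _ "Pow A"])
  ultimately show ?thesis
    using assms by (simp add: binom_sum_def n_subsets)
qed

lemma binom_sum_Suc_Suc: "binom_sum (Suc m) (Suc a) = binom_sum m a + binom_sum m (Suc a)"
  unfolding binom_sum_def sum.atMost_Suc_shift by (simp add: sum.distrib)

lemma binom_sum_mono: "a \<le> b \<Longrightarrow> binom_sum m a \<le> binom_sum m b"
  unfolding binom_sum_def by (intro sum_mono2) auto

lemma binom_sum_pos: "0 < binom_sum m a"
  unfolding binom_sum_def by (rule ordered_comm_monoid_add_class.sum_pos2[where i = 0]) auto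

lemma two_pow_mult_binom_sum_le: "2 ^ j * binom_sum m a \<le> binom_sum (m + j) (a + j)"
proof (induction j)
  case (Suc j)
  have "2 ^ Suc j * binom_sum m a \<le> 2 * binom_sum (m + j) (a + j)"
    using Suc by simp
  also have "\<dots> \<le> binom_sum (m + j) (a + j) + binom_sum (m + j) (Suc (a + j))"
    using binom_sum_mono[of "a + j" "Suc (a + j)"] by simp
  also have "\<dots> = binom_sum (m + Suc j) (a + Suc j)"
    by (simp add: binom_sum_Suc_Suc)
  finally show ?case .
qed simp

lemma binomial_Suc_mult_le:
  assumes "s0 \<le> s"
  shows "(m choose Suc s) * Suc s0 \<le> (m choose s) * (m - s0)"
proof -
  have "(m choose Suc s) * Suc s = (m choose s) * (m - s)"
  proof (cases m)
    case (Suc p)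
    then show ?thesis
      using Suc_times_binomial[of s p] binomial_absorb_comp[of m s] by (simp add: mult.commute)
  qed simp
  then show ?thesis
    using assms by (metis Suc_le_mono diff_le_mono2 le_trans mult_le_mono2 order_refl)
qed

lemma binomial_Suc_le_ratio:
  fixes \<rho> :: real
  assumes "s0 \<le> s" and "real (m - s0) \<le> \<rho> * real (Suc s0)"
  shows "real (m choose Suc s) \<le> \<rho> * real (m choose s)"
proof -
  have "real (m choose Suc s) * real (Suc s0) \<le> real (m choose s) * real (m - s0)"
    using of_nat_mono[OF binomial_Suc_mult_le[OF assms(1), of m], where 'a = real]
    by (simp only: of_nat_mult)
  also have "\<dots> \<le> real (m choose s) * (\<rho> * real (Suc s0))"
    using assms(2) by (rule mult_left_mono) simp
  finally show ?thesis
    by (simp add: mult.assoc mult.commute)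
qed

lemma binomial_le_pow_mult:
  fixes \<rho> :: real
  assumes "0 \<le> \<rho>" and ratio: "\<And>s. s0 \<le> s \<Longrightarrow> real (m choose Suc s) \<le> \<rho> * real (m choose s)"
    and "s0 \<le> s"
  shows "real (m choose (s + d)) \<le> \<rho> ^ d * real (m choose s)"
proof (induction d)
  case (Suc d)
  have "real (m choose (s + Suc d)) \<le> \<rho> * real (m choose (s + d))"
    using ratio[of "s + d"] \<open>s0 \<le> s\<close> by simp
  also have "\<dots> \<le> \<rho> * (\<rho> ^ d * real (m choose s))"
    using Suc \<open>0 \<le> \<rho>\<close> by (rule mult_left_mono)
  finally show ?case by simp
qed simp

lemma sum_binomial_below_le_binom_sum:
  assumes "L \<le> Suc a"
  shows "(\<Sum>i<L. m choose (a - i)) \<le> binom_sum m a"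
proof -
  have "inj_on (\<lambda>i. a - i) {..<L}"
    using assms by (auto simp: inj_on_def)
  then have "(\<Sum>i<L. m choose (a - i)) = (\<Sum>s\<in>(\<lambda>i. a - i) ` {..<L}. m choose s)"
    by (simp add: sum.reindex)
  also have "\<dots> \<le> binom_sum m a"
    unfolding binom_sum_def by (intro sum_mono2) auto
  finally show ?thesis .
qed

lemma binom_sum_add_le:
  fixes \<rho> :: real
  assumes L: "k * N \<le> Suc a" and "1 \<le> \<rho>"
    and ratio: "\<And>s. Suc a - k * N \<le> s \<Longrightarrow> real (m choose Suc s) \<le> \<rho> * real (m choose s)"
  shows "real N * real (binom_sum m (a + k)) \<le> (real N + \<rho> ^ (k * N + k)) * real (binom_sum m a)"
proof -
  \<comment> \<open>each of the \<open>k\<close> coefficients above \<open>a\<close> is at most \<open>\<rho>\<^bsup>kN+k\<^esup>\<close> times each of the \<open>kN\<close> ones up to \<open>a\<close>\<close>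
  define L where "L = k * N"
  define U where "U = (\<Sum>s = Suc a..a + k. m choose s)"
  have "real L * real (m choose s) \<le> \<rho> ^ (L + k) * real (binom_sum m a)"
    if s: "s \<in> {Suc a..a + k}" for s
  proof -
    have "real (m choose s) \<le> \<rho> ^ (L + k) * real (m choose (a - i))" if "i < L" for i
    proof -
      have "real (m choose ((a - i) + (s - (a - i)))) \<le> \<rho> ^ (s - (a - i)) * real (m choose (a - i))"
        using \<open>1 \<le> \<rho>\<close> \<open>i < L\<close> by (intro binomial_le_pow_mult[OF _ ratio]) (auto simp: L_def)
      also have "\<dots> \<le> \<rho> ^ (L + k) * real (m choose (a - i))"
        using s \<open>i < L\<close> \<open>1 \<le> \<rho>\<close> by (intro mult_right_mono power_increasing) auto
      finally show ?thesis
        using s by (simp add: le_diff_conv)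
    qed
    then have "real L * real (m choose s) \<le> \<rho> ^ (L + k) * real (\<Sum>i<L. m choose (a - i))"
      using sum_mono[of "{..<L}" "\<lambda>_. real (m choose s)"] by (simp add: sum_distrib_left)
    also have "\<dots> \<le> \<rho> ^ (L + k) * real (binom_sum m a)"
      using sum_binomial_below_le_binom_sum[of L a m] L \<open>1 \<le> \<rho>\<close>
      by (intro mult_left_mono of_nat_mono) (auto simp: L_def)
    finally show ?thesis .
  qed
  from sum_bounded_above[of "{Suc a..a + k}", OF this]
  have "real L * real U \<le> real k * (\<rho> ^ (L + k) * real (binom_sum m a))"
    by (simp add: U_def sum_distrib_left)
  then have "real N * real U \<le> \<rho> ^ (L + k) * real (binom_sum m a)"
    by (cases "k = 0") (auto simp: U_def L_def)
  moreover have "binom_sum m (a + k) = binom_sum m a + U"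
    by (simp add: binom_sum_def U_def sum_up_index_split)
  ultimately show ?thesis
    by (simp add: L_def algebra_simps)
qed

definition hamming_ball :: "nat \<Rightarrow> nat set \<Rightarrow> nat \<Rightarrow> nat set set" where
  "hamming_ball n x r = {y \<in> cube n. card (sym_diff x y) \<le> r}"

lemma card_subsets_sym_diff_le:
  assumes "finite C" "z \<subseteq> C"
  shows "card {R. R \<subseteq> C \<and> card (sym_diff z R) \<le> r} = binom_sum (card C) r"
proof -
  have "bij_betw (sym_diff z) {R. R \<subseteq> C \<and> card (sym_diff z R) \<le> r} {S. S \<subseteq> C \<and> card S \<le> r}"
  proof (rule bij_betw_byWitness[where f' = "sym_diff z"])
    have "sym_diff z (sym_diff z S) = S" for S
      by blast
    then show "sym_diff z ` {S. S \<subseteq> C \<and> card S \<le> r} \<subseteq> {R. R \<subseteq> C \<and> card (sym_diff z R) \<le> r}"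
      using assms by auto
  qed (use assms in auto)
  then show ?thesis
    using card_subsets_card_le[OF \<open>finite C\<close>] by (simp add: bij_betw_same_card)
qed

lemma card_hamming_ball: "x \<in> cube n \<Longrightarrow> card (hamming_ball n x r) = binom_sum n r"
  using card_subsets_sym_diff_le[of "{..<n}" x r] by (simp add: hamming_ball_def cube_def)

lemma mu_ball_r: "mu n (ball_r n (int r)) = real (binom_sum n r) / 2 ^ n"
proof -
  have "ball_r n (int r) \<inter> cube n = hamming_ball n {} r"
    by (auto simp: ball_r_def hamming_ball_def)
  then show ?thesis
    by (simp add: mu_def card_hamming_ball cube_def)
qed

lemma measure_bind_pmf_of_set:
  assumes "finite S" "S \<noteq> {}"
  shows "measure_pmf.prob (pmf_of_set S \<bind> f) A = (\<Sum>K\<in>S. measure_pmf.prob (f K) A) / card S"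
  using assms
  by (simp add: measure_pmf_bind measure_pmf.measure_bind[where N = "count_space UNIV"]
      measure_pmf_in_subprob_algebra integral_pmf_of_set)

lemma prob_T:
  assumes "k \<le> n"
  shows "measure_pmf.prob (T n k x) A =
    (\<Sum>K | K \<subseteq> {..<n} \<and> card K = k. real (card {R. R \<subseteq> {..<n} - K \<and> x \<inter> K \<union> R \<in> A}))
      / (real (n choose k) * 2 ^ (n - k))"
proof -
  let ?KK = "{K. K \<subseteq> {..<n} \<and> card K = k}"
  have KK: "finite ?KK" "card ?KK = n choose k"
    by (auto intro: finite_subset[of _ "Pow {..<n}"] simp: n_subsets)
  then have "?KK \<noteq> {}"
    using assms by (metis card.empty zero_less_binomial_iff not_less0)
  have "measure_pmf.prob (pmf_of_set (Pow ({..<n} - K)) \<bind> (\<lambda>R. return_pmf (x \<inter> K \<union> R))) A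
      = real (card {R. R \<subseteq> {..<n} - K \<and> x \<inter> K \<union> R \<in> A}) / 2 ^ (n - k)" if "K \<in> ?KK" for K
  proof -
    have "card (Pow ({..<n} - K)) = 2 ^ (n - k)"
      using that finite_subset[OF _ finite_lessThan, of K n] by (simp add: card_Pow card_Diff_subset)
    moreover have "Pow ({..<n} - K) \<inter> (\<lambda>R. x \<inter> K \<union> R) -` A = {R. R \<subseteq> {..<n} - K \<and> x \<inter> K \<union> R \<in> A}"
      by auto
    ultimately show ?thesis
      by (simp add: map_pmf_def[symmetric] measure_pmf_of_set[of "Pow ({..<n} - K)"] Pow_not_empty)
  qed
  then show ?thesis
    unfolding T_def using KK \<open>?KK \<noteq> {}\<close>
    by (simp add: measure_bind_pmf_of_set sum_divide_distrib mult.commute)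
qed

lemma pmf_T:
  assumes "k \<le> n" "x \<in> cube n" "y \<in> cube n"
  shows "pmf (T n k x) y = real ((n - card (sym_diff x y)) choose k) / (real (n choose k) * 2 ^ (n - k))"
proof -
  let ?KK = "{K. K \<subseteq> {..<n} \<and> card K = k}"
  have "card {R. R \<subseteq> {..<n} - K \<and> x \<inter> K \<union> R \<in> {y}} = of_bool (y \<inter> K = x \<inter> K)" for K
  proof -
    have "{R. R \<subseteq> {..<n} - K \<and> x \<inter> K \<union> R \<in> {y}} = (if y \<inter> K = x \<inter> K then {y - K} else {})"
      using assms(3) by (auto simp: cube_def)
    then show ?thesis
      by simp
  qed
  then have "pmf (T n k x) y = real (card (?KK \<inter> {K. y \<inter> K = x \<inter> K})) / (real (n choose k) * 2 ^ (n - k))"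
    using prob_T[OF assms(1), of x "{y}"]
    by (simp add: measure_pmf_single sum_of_bool_eq[of ?KK] finite_subset[of _ "Pow {..<n}"])
  moreover have "?KK \<inter> {K. y \<inter> K = x \<inter> K} = {K. K \<subseteq> {..<n} - sym_diff x y \<and> card K = k}"
    by auto
  moreover have "card ({..<n} - sym_diff x y) = n - card (sym_diff x y)"
    using assms(2,3) by (subst card_Diff_subset) (auto simp: cube_def intro: finite_subset)
  ultimately show ?thesis
    by (simp add: n_subsets)
qed

lemma prob_T_hamming_ball:
  assumes "k \<le> n" "x \<in> cube n"
  shows "measure_pmf.prob (T n k x) (hamming_ball n x r) = real (binom_sum (n - k) r) / 2 ^ (n - k)"
proof -
  have "card {R. R \<subseteq> {..<n} - K \<and> x \<inter> K \<union> R \<in> hamming_ball n x r} = binom_sum (n - k) r"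
    if "K \<subseteq> {..<n}" "card K = k" for K
  proof -
    have "{R. R \<subseteq> {..<n} - K \<and> x \<inter> K \<union> R \<in> hamming_ball n x r}
        = {R. R \<subseteq> {..<n} - K \<and> card (sym_diff (x - K) R) \<le> r}"
    proof -
      have "sym_diff x (x \<inter> K \<union> R) = sym_diff (x - K) R" if "R \<subseteq> {..<n} - K" for R
        using that by blast
      then show ?thesis
        using assms(2) by (auto simp: hamming_ball_def cube_def)
    qed
    then show ?thesis
      using card_subsets_sym_diff_le[of "{..<n} - K" "x - K" r] assms(2) that
      by (simp add: cube_def card_Diff_subset finite_subset Diff_mono)
  qed
  then show ?thesis
    using assms(1) by (simp add: prob_T n_subsets finite_subset[of _ "Pow {..<n}"])
qed

lemma sum_le_sum_threshold:
  fixes f :: "'a \<Rightarrow> 'b::linordered_semidom"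
  assumes "finite X" "finite B" "card X \<le> card B" "0 \<le> t"
    and below: "\<And>y. y \<in> X - B \<Longrightarrow> f y \<le> t" and above: "\<And>y. y \<in> B - X \<Longrightarrow> t \<le> f y"
  shows "sum f X \<le> sum f B"
proof -
  have "card (X - B) \<le> card (B - X)"
    using assms(1-3) by (metis card_Diff_subset_Int finite_Int inf_commute diff_le_mono)
  have "sum f (X - B) \<le> of_nat (card (X - B)) * t"
    using below by (rule sum_bounded_above)
  also have "\<dots> \<le> of_nat (card (B - X)) * t"
    using \<open>card (X - B) \<le> card (B - X)\<close> \<open>0 \<le> t\<close> by (intro mult_right_mono) auto
  also have "\<dots> \<le> sum f (B - X)"
    using above by (rule sum_bounded_below)
  finally show ?thesis
    using assms(1,2) by (metis add_left_mono inf_commute sum.Int_Diff)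
qed

lemma prob_T_le_binom_sum:
  assumes "k \<le> n" "x \<in> cube n" "X \<subseteq> cube n" "card X \<le> binom_sum n r"
  shows "measure_pmf.prob (T n k x) X \<le> real (binom_sum (n - k) r) / 2 ^ (n - k)"
proof -
  let ?B = "hamming_ball n x r"
  let ?D = "real (n choose k) * 2 ^ (n - k)"
  have fin: "finite X" "finite ?B"
    using assms(3) by (auto simp: hamming_ball_def cube_def intro: finite_subset)
  have "(\<Sum>y\<in>X. pmf (T n k x) y) \<le> (\<Sum>y\<in>?B. pmf (T n k x) y)"
  proof (rule sum_le_sum_threshold[OF fin, where t = "real ((n - Suc r) choose k) / ?D"])
    show "card X \<le> card ?B"
      using assms(2,4) by (simp add: card_hamming_ball)
  next
    fix y assume "y \<in> X - ?B"
    then have "y \<in> cube n" "Suc r \<le> card (sym_diff x y)"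
      using assms(3) by (auto simp: hamming_ball_def)
    then show "pmf (T n k x) y \<le> real ((n - Suc r) choose k) / ?D"
      using assms(1,2) by (auto simp: pmf_T intro!: divide_right_mono binomial_right_mono)
  next
    fix y assume "y \<in> ?B - X"
    then have "y \<in> cube n" "card (sym_diff x y) \<le> r"
      by (auto simp: hamming_ball_def)
    then show "real ((n - Suc r) choose k) / ?D \<le> pmf (T n k x) y"
      using assms(1,2) by (auto simp: pmf_T intro!: divide_right_mono binomial_right_mono)
  qed simp
  then show ?thesis
    using assms(1,2) fin by (simp add: prob_T_hamming_ball flip: measure_measure_pmf_finite)
qed

lemma one_plus_pow_le_two:
  fixes d :: real
  assumes "0 \<le> d" "real j * d \<le> 1/2"
  shows "(1 + d) ^ j \<le> 2"
proof -
  have "(1 + d) ^ j \<le> exp d ^ j"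
    using assms(1) by (intro power_mono) auto
  also have "\<dots> = exp (real j * d)"
    by (simp add: exp_of_nat_mult)
  also have "\<dots> \<le> exp (1/2)"
    using assms(2) by simp
  finally show ?thesis
    using exp_half_le2 by linarith
qed

lemma parameter_bounds:
  fixes p :: real
  assumes "1 \<le> k" "1 \<le> N" "\<bar>p\<bar> * (real k * real N) \<le> 1/64" "(real k * real N)\<^sup>2 \<le> real n / 96"
  defines "q \<equiv> real k * real N"
  shows "\<bar>p\<bar> \<le> 1/64" and "real k \<le> q" and "96 * q \<le> real n"
    and "2 * q * (8 * \<bar>p\<bar> + 12 * q / real n) \<le> 1/2"
proof -
  have "1 * 1 \<le> q"
    using assms(1,2) unfolding q_def by (intro mult_mono) auto
  then have "1 \<le> q"
    by simp
  then have "\<bar>p\<bar> * 1 \<le> \<bar>p\<bar> * q"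
    by (intro mult_left_mono) auto
  then show "\<bar>p\<bar> \<le> 1/64"
    using assms(3) by (simp add: q_def)
  show "real k \<le> q"
    using assms(2) by (simp add: q_def mult_le_cancel_left1)
  have "q \<le> q\<^sup>2"
    using \<open>1 \<le> q\<close> by (simp add: power2_eq_square mult_le_cancel_left1)
  then show qn: "96 * q \<le> real n"
    using assms(4) by (simp add: q_def)
  have "q\<^sup>2 / real n \<le> 1/96"
    using assms(4) \<open>1 \<le> q\<close> qn by (simp add: q_def divide_le_eq)
  moreover have "\<bar>p\<bar> * q \<le> 1/64"
    using assms(3) by (simp add: q_def)
  moreover have "2 * q * (8 * \<bar>p\<bar> + 12 * q / real n) = 16 * (\<bar>p\<bar> * q) + 24 * (q\<^sup>2 / real n)"
    by (simp add: algebra_simps power2_eq_square)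
  ultimately show "2 * q * (8 * \<bar>p\<bar> + 12 * q / real n) \<le> 1/2"
    by linarith
qed

lemma binom_sum_top_layers_le:
  fixes d :: real
  assumes L: "k * N \<le> Suc a" and "0 \<le> d" and "real (k * N + k) * d \<le> 1/2"
    and "real (m - (Suc a - k * N)) \<le> (1 + d) * real (Suc (Suc a - k * N))"
  shows "real N * real (binom_sum m (a + k)) \<le> (real N + 2) * real (binom_sum m a)"
proof -
  have "real N * real (binom_sum m (a + k)) \<le> (real N + (1 + d) ^ (k * N + k)) * real (binom_sum m a)"
    using assms by (intro binom_sum_add_le binomial_Suc_le_ratio) auto
  also have "\<dots> \<le> (real N + 2) * real (binom_sum m a)"
    using assms(2,3) by (intro mult_right_mono add_left_mono one_plus_pow_le_two) auto
  finally show ?thesis .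
qed

lemma binom_sum_density_le_mult:
  fixes c :: real
  assumes "k \<le> r" "k \<le> n" "0 \<le> c" "real (binom_sum (n - k) r) \<le> c * real (binom_sum (n - k) (r - k))"
  shows "real (binom_sum (n - k) r) / 2 ^ (n - k) \<le> c * (real (binom_sum n r) / 2 ^ n)"
proof -
  have "2 ^ k * binom_sum (n - k) (r - k) \<le> binom_sum n r"
    using two_pow_mult_binom_sum_le[of k "n - k" "r - k"] assms(1,2) by simp
  from of_nat_mono[OF this, where 'a = real]
  have "real (binom_sum (n - k) (r - k)) \<le> real (binom_sum n r) / 2 ^ k"
    by (simp add: field_simps)
  with assms(3,4) have "real (binom_sum (n - k) r) \<le> c * (real (binom_sum n r) / 2 ^ k)"
    by (meson mult_left_mono order_trans)
  then show ?thesis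
    using assms(2) by (simp add: power_diff field_simps)
qed

lemma binom_sum_density_le:
  fixes p :: real
  assumes k: "1 \<le> k" and N: "1 \<le> N"
    and p: "\<bar>p\<bar> * (real k * real N) \<le> 1/64" and kN: "(real k * real N)\<^sup>2 \<le> real n / 96"
    and r: "(1/2 - p) * real n < real r"
  shows "real (binom_sum (n - k) r) / 2 ^ (n - k) \<le> (1 + 2 / real N) * (real (binom_sum n r) / 2 ^ n)"
proof -
  define q where "q = real k * real N"
  have p64: "\<bar>p\<bar> \<le> 1/64" and kq: "real k \<le> q" and qn: "96 * q \<le> real n"
    and small: "2 * q * (8 * \<bar>p\<bar> + 12 * q / real n) \<le> 1/2"
    using parameter_bounds[OF k N p kN] by (simp_all add: q_def)
  have q1: "1 \<le> q"
    using k kq by linarith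
  then have kn: "k \<le> n"
    using kq qn by (simp flip: of_nat_le_iff)
  have pn: "p * real n \<le> \<bar>p\<bar> * real n" "\<bar>p\<bar> * real n \<le> real n / 64"
    using mult_right_mono[OF p64, of "real n"] by (auto intro: mult_right_mono)
  have r': "real n / 2 - p * real n < real r"
    using r by (simp add: algebra_simps)
  have "real k + q \<le> real r"
    using r' pn kq qn by linarith
  then have kr: "k \<le> r" and L: "k * N \<le> Suc (r - k)"
    using kq by (auto simp: q_def simp flip: of_nat_mult)
  define s0 where "s0 = Suc (r - k) - k * N"
  \<comment> \<open>\<open>(n/4) d = 2|p|n + 3q\<close> absorbs the excess of \<open>n - k - s0\<close> over \<open>s0 + 1\<close>, and \<open>(q + k) d \<le> 1/2\<close>\<close>
  define d where "d = 8 * \<bar>p\<bar> + 12 * q / real n"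
  have rs0: "real s0 = real r - real k + 1 - q"
    using kr L by (simp add: s0_def q_def)
  have d0: "0 \<le> d"
    using q1 qn by (simp add: d_def)
  have "real n / 4 \<le> real s0 + 1"
    using rs0 r' pn kq qn by linarith
  then have sd: "real n / 4 * d \<le> (real s0 + 1) * d"
    using d0 by (rule mult_right_mono)
  have nd: "real n / 4 * d = 2 * (\<bar>p\<bar> * real n) + 3 * q"
    using q1 qn by (simp add: d_def field_simps)
  have ratio: "real (n - k - s0) \<le> (1 + d) * real (Suc s0)"
  proof (cases "s0 \<le> n - k")
    case True
    have "(1 + d) * real (Suc s0) = real s0 + 1 + (real s0 + 1) * d"
      by (simp add: algebra_simps)
    moreover have "real (n - k - s0) = real n - real k - real s0"
      using True kn by simp
    ultimately show ?thesis
      using sd nd rs0 r' pn kq by linarith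
  qed (use d0 in simp)
  have exponent: "real (k * N + k) * d \<le> 1/2"
  proof -
    have "real (k * N + k) * d \<le> 2 * q * d"
      using kq d0 by (intro mult_right_mono) (auto simp: q_def mult.commute)
    then show ?thesis
      using small unfolding d_def by linarith
  qed
  have "real N * real (binom_sum (n - k) r) \<le> (real N + 2) * real (binom_sum (n - k) (r - k))"
    using binom_sum_top_layers_le[OF L d0 exponent ratio[unfolded s0_def]] kr by simp
  then show ?thesis
    using N kr kn by (intro binom_sum_density_le_mult) (simp_all add: field_simps)
qed

lemma prob_T_less:
  fixes p \<eta> :: real and r :: int
  assumes k: "1 \<le> k" and N: "1 \<le> N"
    and p: "\<bar>p\<bar> * (real k * real N) \<le> 1/64" and kN: "(real k * real N)\<^sup>2 \<le> real n / 96"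
    and r: "(1/2 - p) * real n < real_of_int r" and \<eta>: "2 < \<eta> * real N"
    and x: "x \<in> cube n" and X: "X \<subseteq> cube n" and mu: "mu n X \<le> mu n (ball_r n r)"
  shows "measure_pmf.prob (T n k x) X < (1 + \<eta>) * mu n (ball_r n r)"
proof -
  have "\<bar>p\<bar> \<le> 1/64" "real k \<le> real k * real N" "96 * (real k * real N) \<le> real n"
    using parameter_bounds(1-3)[OF k N p kN] by simp_all
  then have kn: "k \<le> n"
    by (simp flip: of_nat_le_iff)
  have "0 \<le> (1/2 - p) * real n"
    using \<open>\<bar>p\<bar> \<le> 1/64\<close> by (intro mult_nonneg_nonneg) auto
  then have "0 \<le> r"
    using r by linarith
  then obtain r' where r': "r = int r'"
    using nonneg_eq_int by blast
  have "real (card X) / 2 ^ n \<le> real (binom_sum n r') / 2 ^ n"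
    using mu X by (simp only: r' mu_ball_r) (simp add: mu_def Int_absorb2)
  then have "card X \<le> binom_sum n r'"
    by (simp add: divide_le_cancel)
  then have "measure_pmf.prob (T n k x) X \<le> real (binom_sum (n - k) r') / 2 ^ (n - k)"
    using kn x X by (rule prob_T_le_binom_sum[rotated 3])
  also have "\<dots> \<le> (1 + 2 / real N) * mu n (ball_r n r)"
    using binom_sum_density_le[OF k N p kN] r by (simp add: r' mu_ball_r)
  also have "\<dots> < (1 + \<eta>) * mu n (ball_r n r)"
    using \<eta> N by (intro mult_strict_right_mono) (auto simp: r' mu_ball_r binom_sum_pos field_simps)
  finally show ?thesis .
qed

lemma eventually_small_parameters:
  fixes k :: "nat \<Rightarrow> nat" and \<phi> :: "nat \<Rightarrow> real"
  assumes "(\<lambda>n. real (k n)) \<in> O(\<lambda>n. ln (real n))" and "\<phi> \<in> o(\<lambda>n. 1 / real (k n))" and "0 < N"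
  shows "eventually (\<lambda>n. \<bar>\<phi> n\<bar> * (real (k n) * real N) \<le> 1/64 \<and> (real (k n) * real N)\<^sup>2 \<le> real n / 96) sequentially"
proof -
  have "(\<lambda>n. (real (k n) * real N)\<^sup>2) \<in> O(\<lambda>n. ln (real n) ^ 2)"
    using assms(1) by (intro landau_o.big_power) simp
  moreover have "(\<lambda>n::nat. ln (real n) ^ 2) \<in> o(\<lambda>n. real n)"
    by real_asymp
  ultimately have "(\<lambda>n. (real (k n) * real N)\<^sup>2) \<in> o(\<lambda>n. real n)"
    by (rule landau_o.big_small_trans)
  then have "eventually (\<lambda>n. (real (k n) * real N)\<^sup>2 \<le> real n / 96) sequentially"
    by (auto dest!: landau_o.smallD[where c = "1/96"] elim!: eventually_mono)
  moreover have "eventually (\<lambda>n. \<bar>\<phi> n\<bar> \<le> 1 / (64 * real N) * \<bar>1 / real (k n)\<bar>) sequentially"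
    using landau_o.smallD[OF assms(2), of "1 / (64 * real N)"] assms(3) by simp
  then have "eventually (\<lambda>n. \<bar>\<phi> n\<bar> * (real (k n) * real N) \<le> 1/64) sequentially"
  proof (rule eventually_mono)
    fix n assume "\<bar>\<phi> n\<bar> \<le> 1 / (64 * real N) * \<bar>1 / real (k n)\<bar>"
    then have "\<bar>\<phi> n\<bar> * (real (k n) * real N) \<le> 1 / (64 * real N) * \<bar>1 / real (k n)\<bar> * (real (k n) * real N)"
      by (rule mult_right_mono) simp
    \<comment> \<open>no hypothesis \<open>k n \<ge> 1\<close> is needed: where \<open>k n = 0\<close>, \<open>1 / real (k n) = 0\<close> forces \<open>\<phi> n = 0\<close>\<close>
    also have "\<dots> \<le> 1/64"
      using assms(3) by (cases "k n = 0") (simp_all add: field_simps)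
    finally show "\<bar>\<phi> n\<bar> * (real (k n) * real N) \<le> 1/64" .
  qed
  ultimately show ?thesis
    by eventually_elim simp
qed

theorem claimE:
  fixes k :: "nat \<Rightarrow> nat" and \<phi> :: "nat \<Rightarrow> real"
  assumes "\<And>n. 1 \<le> k n"
    and "(\<lambda>n. real (k n)) \<in> O(\<lambda>n. ln (real n))"
    and "\<phi> \<in> o(\<lambda>n. 1 / real (k n))"
  shows "\<forall>\<eta>>0. \<exists>n0. \<forall>n\<ge>n0. \<forall>r::int. real_of_int r > (1/2 - \<phi> n) * real n \<longrightarrow>
           (\<forall>x\<in>cube n. \<forall>X\<subseteq>cube n. mu n X \<le> mu n (ball_r n r) \<longrightarrow>
              measure_pmf.prob (T n (k n) x) X < (1 + \<eta>) * mu n (ball_r n r))"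
proof (intro allI impI)
  fix \<eta> :: real assume "0 < \<eta>"
  obtain N :: nat where "2 / \<eta> < real N"
    using reals_Archimedean2 by blast
  then have \<eta>N: "2 < \<eta> * real N"
    using \<open>0 < \<eta>\<close> by (simp add: divide_less_eq mult.commute)
  then have N: "1 \<le> N"
    by (cases N) auto
  obtain n0 where n0: "\<And>n. n0 \<le> n \<Longrightarrow>
      \<bar>\<phi> n\<bar> * (real (k n) * real N) \<le> 1/64 \<and> (real (k n) * real N)\<^sup>2 \<le> real n / 96"
    using eventually_small_parameters[OF assms(2,3), of N] N by (auto simp: eventually_sequentially)
  show "\<exists>n0. \<forall>n\<ge>n0. \<forall>r::int. real_of_int r > (1/2 - \<phi> n) * real n \<longrightarrow>
           (\<forall>x\<in>cube n. \<forall>X\<subseteq>cube n. mu n X \<le> mu n (ball_r n r) \<longrightarrow>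
              measure_pmf.prob (T n (k n) x) X < (1 + \<eta>) * mu n (ball_r n r))"
  proof (intro exI allI impI ballI)
    fix n r x X
    assume "n0 \<le> n" and r: "(1/2 - \<phi> n) * real n < real_of_int r"
      and "x \<in> cube n" "X \<subseteq> cube n" "mu n X \<le> mu n (ball_r n r)"
    with n0[OF \<open>n0 \<le> n\<close>] show "measure_pmf.prob (T n (k n) x) X < (1 + \<eta>) * mu n (ball_r n r)"
      by (intro prob_T_less[OF assms(1) N _ _ r \<eta>N]) simp_all
  qed
qed

end
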